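(* Let $\mathcal{A}_l\subseteq\mathcal{A}$ be nonempty and $\alpha\in[0,1)$. Consider $$\mathcal{P}(\mathcal{A}_l,\alpha)=\min_{H\succ0}\ -\log\det(H)\quad\text{s.t.}\quad(1-\alpha)a^\top Ha+\alpha\,\mathrm{Tr}(V_{\pi_{\mathrm{off}}}H)\le d\ \ \forall a\in\mathcal{A}_l,$$ and $$\mathcal{D}(\mathcal{A}_l,\alpha)=\max_{\pi\in\Delta(\mathcal{A}_l)}\log\det\big((1-\alpha)V_\pi+\alpha V_{\pi_{\mathrm{off}}}\big).$$ Then $\mathcal{P}(\mathcal{A}_l,\alpha)=\mathcal{D}(\mathcal{A}_l,\alpha)$.
   Context: $\mathcal{A}\subset\mathbb{R}^d$ is a finite set with $\mathrm{span}(\mathcal{A})=\mathbb{R}^d$; $\pi_{\mathrm{off}}\in\Delta(\mathcal{A})$; $\Delta(\mathcal{B})$ is the probability simplex over $\mathcal{B}$; $V_\pi=\sum_a\pi(a)aa^\top$. *)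

theory Defs
  imports "HOL-Analysis.Analysis"
begin

definition outer :: "real^'n \<Rightarrow> real^'n^'n" where
  "outer a = (\<chi> i j. a $ i * a $ j)"

definition Vmat :: "(real^'n \<Rightarrow> real) \<Rightarrow> (real^'n) set \<Rightarrow> real^'n^'n" where
  "Vmat p S = (\<Sum>a\<in>S. p a *\<^sub>R outer a)"

definition prob_simplex :: "'a set \<Rightarrow> ('a \<Rightarrow> real) set" where
  "prob_simplex S = {p. (\<forall>a\<in>S. 0 \<le> p a) \<and> (\<forall>a. a \<notin> S \<longrightarrow> p a = 0) \<and> sum p S = 1}"

definition pos_def :: "real^'n^'n \<Rightarrow> bool" where
  "pos_def H \<longleftrightarrow> transpose H = H \<and> (\<forall>x. x \<noteq> 0 \<longrightarrow> x \<bullet> (H *v x) > 0)"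

definition logdet :: "real^'n^'n \<Rightarrow> ereal" where
  "logdet M = (if det M > 0 then ereal (ln (det M)) else -\<infinity>)"

definition primal_val ::
  "(real^'n \<Rightarrow> real) \<Rightarrow> (real^'n) set \<Rightarrow> (real^'n) set \<Rightarrow> real \<Rightarrow> ereal" where
  "primal_val pi_off A Al \<alpha> =
     (INF H \<in> {H. pos_def H \<and>
                 (\<forall>a\<in>Al. (1 - \<alpha>) * (a \<bullet> (H *v a)) + \<alpha> * trace (Vmat pi_off A ** H) \<le> real CARD('n))}.
        - logdet H)"

definition dual_val ::
  "(real^'n \<Rightarrow> real) \<Rightarrow> (real^'n) set \<Rightarrow> (real^'n) set \<Rightarrow> real \<Rightarrow> ereal" where
  "dual_val pi_off A Al \<alpha> =
     (SUP p \<in> prob_simplex Al. logdet ((1 - \<alpha>) *\<^sub>R Vmat p Al + \<alpha> *\<^sub>R Vmat pi_off A))"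

end

theory Submission
  imports Defs
begin

text \<open>
  With \<open>N\<^sub>a = (1 - \<alpha>) a a\<^sup>T + \<alpha> V\<^bsub>\<pi>off\<^esub>\<close> the constraints read \<open>tr(N\<^sub>a H) \<le> d\<close> and the dual
  matrices are the mixtures of the \<open>N\<^sub>a\<close>, so the theorem is duality for D-optimal design over
  a finite family of positive semidefinite matrices.
  Weak duality is AM-GM for the eigenvalues of \<open>R\<^sup>T M R\<close>, where \<open>H = R R\<^sup>T\<close>:
  \<open>det M det H \<le> (tr(M H) / d)\<^sup>d \<le> 1\<close>.
  For the converse, let \<open>M\<close> maximise \<open>det\<close> over the compact convex hull of the \<open>N\<^sub>a\<close>.
  If \<open>det M > 0\<close>, then \<open>H = M\<^sup>-\<^sup>1\<close> is feasible, because
  \<open>t \<mapsto> det ((1 - t) M + t N\<^sub>a)\<close> has derivative \<open>det M (tr(N\<^sub>a M\<^sup>-\<^sup>1) - d)\<close> at \<open>0\<close>, and it attains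
  \<open>-log det H = log det M\<close>. If \<open>det M = 0\<close>, the uniform mixture has an isotropic unit vector
  \<open>x\<close>, which is then isotropic for every \<open>N\<^sub>a\<close>; so \<open>c I + s x x\<^sup>T\<close> is feasible for small
  \<open>c\<close> and every \<open>s\<close>, and its determinant is unbounded: both values are \<open>-\<infinity>\<close>.
\<close>

section \<open>Spectral theorem for symmetric matrices\<close>

lemma linear_coeff_eq_0_if_quadratic_nonpos:
  fixes b c :: real
  assumes "\<And>t. 2 * t * b + t\<^sup>2 * c \<le> 0"
  shows "b = 0"
proof (rule ccontr)
  assume "b \<noteq> 0"
  define k where "k = \<bar>c\<bar> + 1"
  have k: "k > 0" "2 * k + c > 0"
    by (auto simp: k_def abs_if)
  have "2 * (b / k) * b + (b / k)\<^sup>2 * c = b\<^sup>2 * (2 * k + c) / k\<^sup>2"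
    using k by (simp add: field_simps power2_eq_square)
  also have "\<dots> > 0"
    using \<open>b \<noteq> 0\<close> k by simp
  finally show False
    using assms[of "b / k"] by linarith
qed

lemma symmetric_matrix_inner_commute:
  fixes A :: "real^'n^'n"
  assumes "transpose A = A"
  shows "x \<bullet> (A *v y) = y \<bullet> (A *v x)"
  by (metis assms dot_lmul_matrix inner_commute vector_transpose_matrix)

lemma rayleigh_maximizer_is_eigenvector:
  fixes A :: "real^'n^'n"
  assumes sym: "transpose A = A" and V: "subspace V"
    and inv: "\<And>x. x \<in> V \<Longrightarrow> A *v x \<in> V"
    and x0: "x0 \<in> V" "x0 \<bullet> x0 = 1"
    and max: "\<And>y. y \<in> V \<Longrightarrow> y \<bullet> (A *v y) \<le> (x0 \<bullet> (A *v x0)) * (y \<bullet> y)"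
  shows "A *v x0 = (x0 \<bullet> (A *v x0)) *\<^sub>R x0"
proof -
  define \<mu> where "\<mu> = x0 \<bullet> (A *v x0)"
  have orth: "y \<bullet> (A *v x0) = 0" if y: "y \<in> V" "x0 \<bullet> y = 0" for y
  proof (rule linear_coeff_eq_0_if_quadratic_nonpos)
    fix t :: real
    have "x0 + t *\<^sub>R y \<in> V"
      using V x0 y by (simp add: subspace_add subspace_scale)
    from max[OF this] show "2 * t * (y \<bullet> (A *v x0)) + t\<^sup>2 * (y \<bullet> (A *v y) - \<mu> * (y \<bullet> y)) \<le> 0"
      using y(2) x0(2) symmetric_matrix_inner_commute[OF sym, of x0 y]
      by (simp add: \<mu>_def algebra_simps power2_eq_square inner_commute)
  qed
  define w where "w = A *v x0 - \<mu> *\<^sub>R x0"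
  have "w \<in> V"
    unfolding w_def using V x0 inv by (simp add: subspace_diff subspace_scale)
  moreover have "x0 \<bullet> w = 0"
    unfolding w_def \<mu>_def using x0(2) by (simp add: inner_diff_right)
  ultimately have "w \<bullet> (A *v x0) = 0"
    by (rule orth)
  with \<open>x0 \<bullet> w = 0\<close> have "w \<bullet> w = 0"
    unfolding w_def by (simp add: inner_diff_left inner_commute)
  then show ?thesis
    unfolding w_def \<mu>_def by simp
qed

lemma symmetric_matrix_eigenvector_in_invariant_subspace:
  fixes A :: "real^'n^'n"
  assumes sym: "transpose A = A" and V: "subspace V" "V \<noteq> {0}"
    and inv: "\<And>x. x \<in> V \<Longrightarrow> A *v x \<in> V"
  obtains x c where "x \<in> V" "norm x = 1" "A *v x = c *\<^sub>R x"
proof -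
  let ?S = "V \<inter> sphere 0 1"
  have unit: "(1 / norm y) *\<^sub>R y \<in> ?S" if "y \<in> V" "y \<noteq> 0" for y
    using V(1) that by (simp add: subspace_scale norm_sgn)
  have "compact ?S"
    using V(1) by (simp add: closed_subspace closed_Int_compact)
  moreover have "?S \<noteq> {}"
    using V subspace_0 unit by blast
  moreover have "continuous_on ?S (\<lambda>x. x \<bullet> (A *v x))"
    by (intro continuous_intros linear_continuous_on matrix_vector_mul_bounded_linear)
  ultimately obtain x0 where x0: "x0 \<in> ?S" and x0_max: "\<And>y. y \<in> ?S \<Longrightarrow> y \<bullet> (A *v y) \<le> x0 \<bullet> (A *v x0)"
    using continuous_attains_sup by meson
  have "y \<bullet> (A *v y) \<le> (x0 \<bullet> (A *v x0)) * (y \<bullet> y)" if "y \<in> V" for y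
  proof (cases "y = 0")
    case False
    have "(y \<bullet> (A *v y)) / (norm y)\<^sup>2 \<le> x0 \<bullet> (A *v x0)"
      using x0_max[OF unit[OF that False]] by (simp add: matrix_vector_mult_scaleR power2_eq_square)
    with False show ?thesis
      by (simp add: divide_le_eq power2_norm_eq_inner)
  qed simp
  with x0 have "A *v x0 = (x0 \<bullet> (A *v x0)) *\<^sub>R x0"
    by (intro rayleigh_maximizer_is_eigenvector[OF sym V(1) inv]) (auto simp: norm_eq_1)
  with x0 show thesis
    using that by auto
qed

lemma span_insert_eq_orthogonal_complement:
  fixes x0 :: "'a::real_inner"
  assumes V: "subspace V" and x0: "x0 \<in> V" "x0 \<bullet> x0 = 1"
    and B: "span B = {y \<in> V. x0 \<bullet> y = 0}"
  shows "span (insert x0 B) = V"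
proof
  show "span (insert x0 B) \<subseteq> V"
    using B V x0(1) span_superset[of B] by (intro span_minimal) auto
  show "V \<subseteq> span (insert x0 B)"
  proof
    fix z assume "z \<in> V"
    then have "z - (x0 \<bullet> z) *\<^sub>R x0 \<in> span B"
      using B V x0 by (simp add: subspace_diff subspace_scale inner_diff_right)
    then have "z - (x0 \<bullet> z) *\<^sub>R x0 + (x0 \<bullet> z) *\<^sub>R x0 \<in> span (insert x0 B)"
      by (meson span_add span_base span_mono span_scale insertI1 subset_insertI subsetD)
    then show "z \<in> span (insert x0 B)"
      by simp
  qed
qed

lemma symmetric_matrix_orthonormal_eigenbasis:
  fixes A :: "real^'n^'n"
  assumes sym: "transpose A = A" and "subspace V" and "\<And>x. x \<in> V \<Longrightarrow> A *v x \<in> V"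
  shows "\<exists>B \<subseteq> V. pairwise orthogonal B \<and> (\<forall>x\<in>B. norm x = 1 \<and> (\<exists>c. A *v x = c *\<^sub>R x)) \<and> span B = V"
  using assms(2,3)
proof (induction "dim V" arbitrary: V rule: less_induct)
  case less
  show ?case
  proof (cases "V = {0}")
    case True
    then show ?thesis
      by (intro exI[of _ "{}"]) auto
  next
    case False
    obtain x0 c where x0: "x0 \<in> V" "norm x0 = 1" "A *v x0 = c *\<^sub>R x0"
      using symmetric_matrix_eigenvector_in_invariant_subspace[OF sym less.prems(1) False less.prems(2)] .
    define W where "W = {y \<in> V. x0 \<bullet> y = 0}"
    have W: "subspace W"
      unfolding W_def using less.prems(1) by (auto simp: subspace_def inner_add_right)
    have W_inv: "A *v y \<in> W" if "y \<in> W" for y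
      using that less.prems(2) x0(3) symmetric_matrix_inner_commute[OF sym, of x0 y]
      unfolding W_def by (simp add: inner_commute)
    have "x0 \<notin> W"
      using x0(2) by (simp add: W_def norm_eq_1)
    then have "W \<subset> V"
      using x0(1) W_def by blast
    then have "dim W < dim V"
      using dim_psubset[of W V] W less.prems(1) by (metis span_eq_iff)
    then obtain B where B: "B \<subseteq> W" "pairwise orthogonal B"
      "\<forall>x\<in>B. norm x = 1 \<and> (\<exists>c. A *v x = c *\<^sub>R x)" "span B = W"
      using less.hyps W W_inv by blast
    have "span (insert x0 B) = V"
      using less.prems(1) x0(1,2) B(4) by (intro span_insert_eq_orthogonal_complement) (auto simp: W_def norm_eq_1)
    then show ?thesis
      using B x0 by (intro exI[of _ "insert x0 B"])
        (auto simp: W_def pairwise_insert orthogonal_def inner_commute span_superset)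
  qed
qed

definition diag_mat :: "real^'n \<Rightarrow> real^'n^'n" where
  "diag_mat l = (\<chi> i j. if i = j then l $ i else 0)"

lemma det_diag_mat: "det (diag_mat l) = (\<Prod>i\<in>UNIV. l $ i)"
  by (subst det_diagonal) (auto simp: diag_mat_def)

lemma trace_diag_mat: "trace (diag_mat l) = (\<Sum>i\<in>UNIV. l $ i)"
  by (simp add: trace_def diag_mat_def)

lemma transpose_diag_mat [simp]: "transpose (diag_mat l) = diag_mat l"
  by (simp add: diag_mat_def transpose_def vec_eq_iff)

lemma diag_mat_mult: "diag_mat l ** diag_mat m = diag_mat (\<chi> i. l $ i * m $ i)"
  by (simp add: diag_mat_def matrix_matrix_mult_def vec_eq_iff if_distrib[of "\<lambda>x. x * _"] cong: if_cong)

lemma diag_mat_const: "diag_mat (\<chi> i. c) = c *\<^sub>R mat 1"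
  by (simp add: diag_mat_def mat_def vec_eq_iff)

lemma diag_mat_mult_vec: "diag_mat l *v y = (\<chi> i. l $ i * y $ i)"
  by (simp add: diag_mat_def matrix_vector_mult_def vec_eq_iff if_distrib[of "\<lambda>x. x * _"] cong: if_cong)

lemma quadratic_form_diag_mat: "y \<bullet> (diag_mat l *v y) = (\<Sum>i\<in>UNIV. l $ i * (y $ i)\<^sup>2)"
  by (simp add: diag_mat_mult_vec inner_vec_def power2_eq_square mult_ac)

theorem symmetric_matrix_diagonalization:
  fixes A :: "real^'n^'n"
  assumes sym: "transpose A = A"
  obtains Q l where "orthogonal_matrix Q" "A = Q ** diag_mat l ** transpose Q"
proof -
  obtain B where B: "pairwise orthogonal B" "\<forall>x\<in>B. norm x = 1 \<and> (\<exists>c. A *v x = c *\<^sub>R x)"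
    "span B = UNIV"
    using symmetric_matrix_orthonormal_eigenbasis[OF sym, of UNIV] by auto
  then have "independent B"
    using pairwise_orthogonal_independent by fastforce
  then have "finite B" "card B = CARD('n)"
    using B(3) basis_card_eq_dim[of B UNIV] finiteI_independent by auto
  then obtain f where f: "bij_betw f (UNIV :: 'n set) B"
    using finite_same_card_bij[of "UNIV :: 'n set" B] by auto
  then have "\<forall>i. \<exists>c. A *v f i = c *\<^sub>R f i"
    using B(2) bij_betwE by blast
  then obtain l where l: "\<And>i. A *v f i = l $ i *\<^sub>R f i"
    by (metis vec_lambda_beta)
  define Q where "Q = (\<chi> i j. f j $ i)"
  have "orthogonal_matrix Q"
    using f B(1,2) unfolding orthogonal_matrix_orthonormal_columns
    by (auto simp: Q_def column_def pairwise_def bij_betw_def inj_on_def) metis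
  moreover have "(A ** Q) $ i $ j = (Q ** diag_mat l) $ i $ j" for i j
  proof -
    have "(A ** Q) $ i $ j = (A *v f j) $ i"
      by (simp add: Q_def matrix_matrix_mult_def matrix_vector_mult_def)
    then show ?thesis
      by (simp add: l Q_def diag_mat_def matrix_matrix_mult_def if_distrib cong: if_cong)
  qed
  then have "A ** Q = Q ** diag_mat l"
    by (simp add: vec_eq_iff)
  ultimately have "A = Q ** diag_mat l ** transpose Q"
    by (metis matrix_mul_assoc matrix_mul_rid orthogonal_matrix_def)
  with \<open>orthogonal_matrix Q\<close> show thesis
    using that by blast
qed

section \<open>Congruences and rank-one matrices\<close>

lemma matrix_add_rdistrib:
  fixes A B :: "real^'n^'m" and C :: "real^'p^'n"
  shows "(A + B) ** C = A ** C + B ** C"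
  by (simp add: matrix_matrix_mult_def vec_eq_iff distrib_right sum.distrib)

lemma transpose_add: "transpose (A + B) = transpose A + transpose (B :: real^'n^'n)"
  by (simp add: transpose_def vec_eq_iff)

lemma transpose_sum: "transpose (\<Sum>i\<in>I. N i) = (\<Sum>i\<in>I. transpose (N i :: real^'n^'n))"
  by (simp add: transpose_def vec_eq_iff)

lemma trace_scaleR: "trace (c *\<^sub>R A) = c * trace (A :: real^'n^'n)"
  by (simp add: trace_def sum_distrib_left)

lemma det_congruence:
  fixes S M :: "real^'n^'n"
  shows "det (S ** M ** transpose S) = det S * det S * det M"
  by (simp add: det_mul det_transpose)

lemma det_orthogonal_congruence:
  fixes Q M :: "real^'n^'n"
  assumes "orthogonal_matrix Q"
  shows "det (Q ** M ** transpose Q) = det M"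
  using det_orthogonal_matrix[OF assms] by (auto simp: det_congruence)

lemma trace_congruence:
  fixes S M :: "real^'n^'n"
  shows "trace (S ** M ** transpose S) = trace (M ** (transpose S ** S))"
  by (metis matrix_mul_assoc trace_mul_sym)

lemma quadratic_form_congruence:
  fixes S M :: "real^'n^'n"
  shows "x \<bullet> ((S ** M ** transpose S) *v x) = (x v* S) \<bullet> (M *v (x v* S))"
  by (simp add: dot_lmul_matrix matrix_vector_mul_assoc[symmetric])

lemma column_vector_mult_orthogonal_matrix:
  fixes Q :: "real^'n^'n"
  assumes "orthogonal_matrix Q"
  shows "column i Q v* Q = axis i 1"
proof -
  have "(column i Q v* Q) $ j = column i Q \<bullet> column j Q" for j
    by (simp add: vector_matrix_mult_def column_def inner_vec_def)
  then show ?thesis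
    using assms unfolding orthogonal_matrix_orthonormal_columns
    by (auto simp: vec_eq_iff axis_def orthogonal_def norm_eq_1)
qed

lemma eigenvalue_orthogonal_diagonalization:
  fixes Q :: "real^'n^'n"
  assumes "orthogonal_matrix Q"
  shows "column i Q \<bullet> ((Q ** diag_mat l ** transpose Q) *v column i Q) = l $ i"
  using assms
  by (simp add: quadratic_form_congruence column_vector_mult_orthogonal_matrix quadratic_form_diag_mat
      axis_def if_distrib[of "\<lambda>x. _ * x\<^sup>2"] cong: if_cong)

lemma outer_mult_vec: "outer a *v y = (a \<bullet> y) *\<^sub>R a"
  by (simp add: outer_def matrix_vector_mult_def inner_vec_def vec_eq_iff sum_distrib_left mult_ac)

lemma quadratic_form_outer: "y \<bullet> (outer a *v y) = (a \<bullet> y)\<^sup>2"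
  by (simp add: outer_mult_vec power2_eq_square inner_commute)

lemma transpose_outer: "transpose (outer a) = outer a"
  by (simp add: outer_def transpose_def vec_eq_iff mult.commute)

lemma trace_mult_outer: "trace (M ** outer x) = x \<bullet> (M *v x)"
  by (simp add: trace_def outer_def matrix_matrix_mult_def matrix_vector_mult_def inner_vec_def
      sum_distrib_left mult_ac)

lemma outer_congruence: "P ** outer y ** transpose P = outer (P *v y)"
  by (simp add: outer_def matrix_matrix_mult_def matrix_vector_mult_def transpose_def vec_eq_iff
      sum_distrib_left sum_distrib_right mult_ac)

lemma trace_mult_scaled_identity_add_outer:
  "trace (N ** (c *\<^sub>R mat 1 + s *\<^sub>R outer x)) = c * trace N + s * (x \<bullet> (N *v x))"
  by (simp add: matrix_add_ldistrib matrix_scalar_ac trace_add trace_scaleR trace_mult_outer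
      scaleR_matrix_vector_assoc[symmetric])

lemma det_scaled_identity_add_outer:
  fixes x :: "real^'n"
  assumes "norm x = 1"
  shows "det (c *\<^sub>R mat 1 + s *\<^sub>R outer x) = c ^ (CARD('n) - 1) * (c + s)"
proof -
  fix k :: 'n
  obtain Q where Q: "orthogonal_matrix Q" "Q *v axis k 1 = x"
    using orthogonal_matrix_exists_basis[OF assms] by blast
  have "c *\<^sub>R mat 1 + s *\<^sub>R outer x = Q ** (c *\<^sub>R mat 1 + s *\<^sub>R outer (axis k 1)) ** transpose Q"
    using Q by (simp add: matrix_add_ldistrib matrix_add_rdistrib matrix_scalar_ac
        scalar_matrix_assoc[symmetric] outer_congruence orthogonal_matrix_def)
  also have "c *\<^sub>R mat 1 + s *\<^sub>R outer (axis k 1) = diag_mat (\<chi> i. if i = k then c + s else c)"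
    by (simp add: outer_def diag_mat_def mat_def axis_def vec_eq_iff)
  finally have "det (c *\<^sub>R mat 1 + s *\<^sub>R outer x) = (\<Prod>i\<in>UNIV. if i = k then c + s else c)"
    using Q(1) by (simp add: det_orthogonal_congruence det_diag_mat)
  also have "\<dots> = (c + s) * c ^ card (UNIV - {k})"
    by (simp add: prod.If_cases Int_absorb1 Diff_eq)
  finally show ?thesis
    by (simp add: mult.commute)
qed

section \<open>Positive semidefinite matrices\<close>

definition pos_semidef :: "real^'n^'n \<Rightarrow> bool" where
  "pos_semidef M \<longleftrightarrow> transpose M = M \<and> (\<forall>x. 0 \<le> x \<bullet> (M *v x))"

lemma pos_def_imp_pos_semidef: "pos_def H \<Longrightarrow> pos_semidef H"
  unfolding pos_def_def pos_semidef_def by (metis inner_zero_left matrix_vector_mult_0_right order.refl less_imp_le)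

lemma pos_semidef_add: "pos_semidef A \<Longrightarrow> pos_semidef B \<Longrightarrow> pos_semidef (A + B)"
  by (simp add: pos_semidef_def transpose_add matrix_vector_mult_add_rdistrib inner_add_right add_nonneg_nonneg)

lemma pos_semidef_scaleR: "0 \<le> c \<Longrightarrow> pos_semidef A \<Longrightarrow> pos_semidef (c *\<^sub>R A)"
  by (simp add: pos_semidef_def transpose_scalar scaleR_matrix_vector_assoc[symmetric])

lemma pos_semidef_outer: "pos_semidef (outer a)"
  by (simp add: pos_semidef_def quadratic_form_outer transpose_outer)

lemma quadratic_form_mixture:
  fixes N :: "'a \<Rightarrow> real^'n^'n"
  shows "x \<bullet> ((\<Sum>i\<in>I. p i *\<^sub>R N i) *v x) = (\<Sum>i\<in>I. p i * (x \<bullet> (N i *v x)))"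
  by (induction I rule: infinite_finite_induct)
    (simp_all add: matrix_vector_mult_add_rdistrib scaleR_matrix_vector_assoc[symmetric] inner_add_right)

lemma trace_mixture_mult:
  fixes N :: "'a \<Rightarrow> real^'n^'n"
  shows "trace ((\<Sum>i\<in>I. p i *\<^sub>R N i) ** H) = (\<Sum>i\<in>I. p i * trace (N i ** H))"
  by (induction I rule: infinite_finite_induct)
    (simp_all add: matrix_add_rdistrib scalar_matrix_assoc[symmetric] trace_add trace_scaleR
      trace_0[unfolded mat_0])

lemma pos_semidef_mixture:
  fixes N :: "'a \<Rightarrow> real^'n^'n"
  assumes "\<And>i. i \<in> I \<Longrightarrow> 0 \<le> p i" "\<And>i. i \<in> I \<Longrightarrow> pos_semidef (N i)"
  shows "pos_semidef (\<Sum>i\<in>I. p i *\<^sub>R N i)"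
  unfolding pos_semidef_def
proof (intro conjI allI)
  have "transpose (N i) = N i" if "i \<in> I" for i
    using assms(2)[OF that] by (simp add: pos_semidef_def)
  then show "transpose (\<Sum>i\<in>I. p i *\<^sub>R N i) = (\<Sum>i\<in>I. p i *\<^sub>R N i)"
    by (simp add: transpose_sum transpose_scalar)
  show "0 \<le> x \<bullet> ((\<Sum>i\<in>I. p i *\<^sub>R N i) *v x)" for x
    using assms unfolding quadratic_form_mixture pos_semidef_def by (simp add: sum_nonneg)
qed

lemma pos_semidef_congruence:
  fixes S M :: "real^'n^'n"
  assumes "pos_semidef M"
  shows "pos_semidef (S ** M ** transpose S)"
  using assms unfolding pos_semidef_def
  by (simp add: quadratic_form_congruence matrix_transpose_mul matrix_mul_assoc)

lemma pos_semidef_trace_nonneg: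
  assumes "pos_semidef M"
  shows "0 \<le> trace M"
proof -
  have "M $ i $ i = axis i 1 \<bullet> (M *v axis i 1)" for i
    by (simp add: matrix_vector_mult_basis inner_axis' column_def)
  then show ?thesis
    using assms unfolding trace_def pos_semidef_def by (simp add: sum_nonneg)
qed

lemma pos_semidef_diagonalization:
  fixes M :: "real^'n^'n"
  assumes "pos_semidef M"
  obtains Q l where "orthogonal_matrix Q" "M = Q ** diag_mat l ** transpose Q" "\<And>i. 0 \<le> l $ i"
proof -
  obtain Q l where Q: "orthogonal_matrix Q" "M = Q ** diag_mat l ** transpose Q"
    using assms symmetric_matrix_diagonalization unfolding pos_semidef_def by blast
  moreover have "0 \<le> l $ i" for i
    using assms eigenvalue_orthogonal_diagonalization[OF Q(1), of i l]
    unfolding pos_semidef_def Q(2)[symmetric] by metis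
  ultimately show thesis
    using that by blast
qed

lemma pos_semidef_factorization:
  fixes M :: "real^'n^'n"
  assumes "pos_semidef M"
  obtains R :: "real^'n^'n" where "M = R ** transpose R"
proof -
  obtain Q l where Q: "orthogonal_matrix Q" "M = Q ** diag_mat l ** transpose Q" "\<And>i. 0 \<le> l $ i"
    using pos_semidef_diagonalization[OF assms] by blast
  define R where "R = Q ** diag_mat (\<chi> i. sqrt (l $ i))"
  have "R ** transpose R = Q ** (diag_mat (\<chi> i. sqrt (l $ i)) ** diag_mat (\<chi> i. sqrt (l $ i))) ** transpose Q"
    by (simp add: R_def matrix_transpose_mul matrix_mul_assoc)
  also have "\<dots> = M"
    using Q by (simp add: diag_mat_mult vec_eq_iff)
  finally show thesis
    using that by metis
qed

lemma pos_semidef_whitening: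
  fixes M :: "real^'n^'n"
  assumes "pos_semidef M" "det M \<noteq> 0"
  obtains S :: "real^'n^'n" where "S ** M ** transpose S = mat 1"
proof -
  obtain Q l where Q: "orthogonal_matrix Q" "M = Q ** diag_mat l ** transpose Q" "\<And>i. 0 \<le> l $ i"
    using pos_semidef_diagonalization[OF assms(1)] by blast
  have "(\<Prod>i\<in>UNIV. l $ i) \<noteq> 0"
    using assms(2) Q(1,2) by (simp add: det_orthogonal_congruence det_diag_mat)
  then have l: "0 < l $ i" for i
    using Q(3)[of i] by (auto simp: less_le)
  have sq: "1 / sqrt (l $ i) * l $ i * (1 / sqrt (l $ i)) = 1" for i
    using l[of i] by (simp add: field_simps)
  define D where "D = diag_mat (\<chi> i. 1 / sqrt (l $ i))"
  have "D ** transpose Q ** M ** transpose (D ** transpose Q) = D ** (transpose Q ** Q) ** diag_mat l ** (transpose Q ** Q) ** D"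
    by (simp add: Q(2) D_def matrix_transpose_mul matrix_mul_assoc)
  also have "\<dots> = D ** diag_mat l ** D"
    using Q(1) by (simp add: orthogonal_matrix_def)
  also have "\<dots> = diag_mat (\<chi> i. 1)"
    by (simp only: D_def diag_mat_mult vec_lambda_beta sq)
  also have "\<dots> = mat 1"
    using diag_mat_const[of 1] by simp
  finally show thesis
    by (rule that)
qed

lemma pos_def_transpose_mult_self:
  fixes S :: "real^'n^'n"
  assumes "det S \<noteq> 0"
  shows "pos_def (transpose S ** S)"
  unfolding pos_def_def
proof (intro conjI allI impI)
  show "transpose (transpose S ** S) = transpose S ** S"
    by (simp add: matrix_transpose_mul)
  fix x :: "real^'n"
  assume "x \<noteq> 0"
  have "\<exists>B. B ** S = mat 1"
    using assms invertible_det_nz invertible_left_inverse by blast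
  with \<open>x \<noteq> 0\<close> have "S *v x \<noteq> 0"
    using matrix_left_invertible_ker by blast
  have "x \<bullet> ((transpose S ** S) *v x) = ((S *v x) v* S) \<bullet> x"
    by (simp add: matrix_vector_mul_assoc[symmetric] inner_commute)
  also have "\<dots> = (S *v x) \<bullet> (S *v x)"
    by (rule dot_lmul_matrix)
  finally show "0 < x \<bullet> ((transpose S ** S) *v x)"
    using \<open>S *v x \<noteq> 0\<close> by simp
qed

lemma pos_semidef_singular_imp_isotropic:
  fixes M :: "real^'n^'n"
  assumes "pos_semidef M" "det M \<le> 0"
  obtains x where "norm x = 1" "x \<bullet> (M *v x) = 0"
proof -
  obtain Q l where Q: "orthogonal_matrix Q" "M = Q ** diag_mat l ** transpose Q" "\<And>i. 0 \<le> l $ i"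
    using pos_semidef_diagonalization[OF assms(1)] by blast
  have "(\<Prod>i\<in>UNIV. l $ i) \<le> 0"
    using assms(2) Q(1,2) by (simp add: det_orthogonal_congruence det_diag_mat)
  moreover have "0 \<le> (\<Prod>i\<in>UNIV. l $ i)"
    using Q(3) by (simp add: prod_nonneg)
  ultimately have "(\<Prod>i\<in>UNIV. l $ i) = 0"
    by linarith
  then obtain j where "l $ j = 0"
    by (auto simp: prod_zero_iff)
  moreover have "norm (column j Q) = 1"
    using Q(1) orthogonal_matrix_orthonormal_columns by blast
  ultimately show thesis
    using that eigenvalue_orthogonal_diagonalization[OF Q(1), of j l] Q(2) by simp
qed

lemma pos_def_det_pos:
  assumes "pos_def H"
  shows "0 < det H"
proof (rule ccontr)
  assume "\<not> 0 < det H"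
  then obtain x where x: "norm x = 1" "x \<bullet> (H *v x) = 0"
    using pos_semidef_singular_imp_isotropic[OF pos_def_imp_pos_semidef[OF assms]] by force
  have "x \<noteq> 0"
    using x(1) by auto
  with x(2) assms show False
    unfolding pos_def_def by (metis less_irrefl)
qed

lemma pos_def_scaled_identity_add_outer:
  assumes "0 < c" "0 \<le> s"
  shows "pos_def (c *\<^sub>R mat 1 + s *\<^sub>R outer x)"
  unfolding pos_def_def
proof (intro conjI allI impI)
  show "transpose (c *\<^sub>R mat 1 + s *\<^sub>R outer x) = c *\<^sub>R mat 1 + s *\<^sub>R outer x"
    by (simp add: transpose_add transpose_scalar transpose_outer)
  show "0 < y \<bullet> ((c *\<^sub>R mat 1 + s *\<^sub>R outer x) *v y)" if "y \<noteq> 0" for y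
    using that assms
    by (simp add: matrix_vector_mult_add_rdistrib scaleR_matrix_vector_assoc[symmetric]
        inner_add_right quadratic_form_outer add_pos_nonneg)
qed

lemma prod_le_mean_power:
  fixes x :: "'a \<Rightarrow> real"
  assumes "finite S" "S \<noteq> {}" "\<And>i. i \<in> S \<Longrightarrow> 0 \<le> x i"
  shows "(\<Prod>i\<in>S. x i) \<le> ((\<Sum>i\<in>S. x i) / card S) ^ card S"
proof -
  have "card S > 0"
    using assms by (simp add: card_gt_0_iff)
  have "(\<Prod>i\<in>S. x i) = ((\<Prod>i\<in>S. x i) powr (1 / card S)) ^ card S"
    using \<open>card S > 0\<close> assms(3) by (simp add: prod_nonneg powr_powr flip: powr_realpow')
  also have "\<dots> \<le> ((\<Sum>i\<in>S. x i) / card S) ^ card S"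
    using arith_geom_mean[OF assms] by (intro power_mono) (simp_all add: sum_divide_distrib)
  finally show ?thesis .
qed

lemma pos_semidef_det_le_trace_power:
  fixes M :: "real^'n^'n"
  assumes "pos_semidef M"
  shows "det M \<le> (trace M / CARD('n)) ^ CARD('n)"
proof -
  obtain Q l where Q: "orthogonal_matrix Q" "M = Q ** diag_mat l ** transpose Q" "\<And>i. 0 \<le> l $ i"
    using pos_semidef_diagonalization[OF assms] by blast
  have "trace M = (\<Sum>i\<in>UNIV. l $ i)"
    using Q(1,2) by (simp add: trace_congruence orthogonal_matrix_def trace_diag_mat)
  moreover have "det M = (\<Prod>i\<in>UNIV. l $ i)"
    using Q(1,2) by (simp add: det_orthogonal_congruence det_diag_mat)
  ultimately show ?thesis
    using prod_le_mean_power[of UNIV "\<lambda>i. l $ i"] Q(3) by simp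
qed

lemma det_mult_le_one_if_trace_le:
  fixes M H :: "real^'n^'n"
  assumes M: "pos_semidef M" and H: "pos_def H" and trace: "trace (M ** H) \<le> CARD('n)"
  shows "det M * det H \<le> 1"
proof -
  obtain R :: "real^'n^'n" where R: "H = R ** transpose R"
    using pos_semidef_factorization[OF pos_def_imp_pos_semidef[OF H]] .
  define X where "X = transpose R ** M ** transpose (transpose R)"
  have "pos_semidef X"
    unfolding X_def by (rule pos_semidef_congruence[OF M])
  have "det X = det M * det H"
    by (simp add: X_def R det_congruence det_mul det_transpose)
  moreover have "trace X = trace (M ** H)"
    using trace_congruence[of "transpose R" M] by (simp add: X_def R)
  moreover have "(trace X / CARD('n)) ^ CARD('n) \<le> 1"
    using pos_semidef_trace_nonneg[OF \<open>pos_semidef X\<close>] trace \<open>trace X = trace (M ** H)\<close>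
    by (intro power_le_one) auto
  ultimately show ?thesis
    using pos_semidef_det_le_trace_power[OF \<open>pos_semidef X\<close>] by simp
qed

section \<open>First-order optimality of the determinant\<close>

lemma prod_one_add_gt_one_near_zero:
  fixes \<mu> :: "'a \<Rightarrow> real"
  assumes "0 < (\<Sum>i\<in>I. \<mu> i)"
  obtains t where "0 < t" "t \<le> 1" "1 < (\<Prod>i\<in>I. 1 + t * \<mu> i)"
proof -
  have "((\<lambda>t. \<Prod>i\<in>I. 1 + t * \<mu> i) has_field_derivative
      (\<Sum>i\<in>I. \<mu> i * (\<Prod>j\<in>I - {i}. 1 + 0 * \<mu> j))) (at 0)"
    by (rule has_field_derivative_prod) (auto intro!: derivative_eq_intros)
  then have "((\<lambda>t. \<Prod>i\<in>I. 1 + t * \<mu> i) has_field_derivative (\<Sum>i\<in>I. \<mu> i)) (at 0)"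
    by simp
  then obtain d where "0 < d"
    and d: "\<And>h. 0 < h \<Longrightarrow> h < d \<Longrightarrow> (\<Prod>i\<in>I. 1 + 0 * \<mu> i) < (\<Prod>i\<in>I. 1 + (0 + h) * \<mu> i)"
    using DERIV_pos_inc_right[OF _ assms] by blast
  show thesis
    using that[of "min (d / 2) 1"] d[of "min (d / 2) 1"] \<open>0 < d\<close> by simp
qed

lemma det_interpolate_identity_gt_one:
  fixes Z :: "real^'n^'n"
  assumes "transpose Z = Z" "CARD('n) < trace Z"
  obtains t where "0 < t" "t \<le> 1" "1 < det ((1 - t) *\<^sub>R mat 1 + t *\<^sub>R Z)"
proof -
  obtain P \<mu> where P: "orthogonal_matrix P" "Z = P ** diag_mat \<mu> ** transpose P"
    using symmetric_matrix_diagonalization[OF assms(1)] by blast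
  have "trace Z = (\<Sum>i\<in>UNIV. \<mu> $ i)"
    using P by (simp add: trace_congruence orthogonal_matrix_def trace_diag_mat)
  with assms(2) have "0 < (\<Sum>i\<in>UNIV. \<mu> $ i - 1)"
    by (simp add: sum_subtractf)
  then obtain t where t: "0 < t" "t \<le> 1" "1 < (\<Prod>i\<in>UNIV. 1 + t * (\<mu> $ i - 1))"
    using prod_one_add_gt_one_near_zero by blast
  have "(1 - t) *\<^sub>R mat 1 + t *\<^sub>R Z = P ** ((1 - t) *\<^sub>R mat 1 + t *\<^sub>R diag_mat \<mu>) ** transpose P"
    using P by (simp add: orthogonal_matrix_def matrix_add_ldistrib matrix_add_rdistrib
        matrix_scalar_ac scalar_matrix_assoc[symmetric] matrix_mul_assoc)
  also have "(1 - t) *\<^sub>R mat 1 + t *\<^sub>R diag_mat \<mu> = diag_mat (\<chi> i. 1 + t * (\<mu> $ i - 1))"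
    by (simp add: diag_mat_def mat_def vec_eq_iff algebra_simps)
  finally show thesis
    using that t P(1) by (simp add: det_orthogonal_congruence det_diag_mat)
qed

lemma det_maximizer_trace_le:
  fixes C :: "(real^'n^'n) set" and S :: "real^'n^'n"
  assumes "convex C" and M: "M \<in> C" "\<And>N. N \<in> C \<Longrightarrow> det N \<le> det M"
    and S: "S ** M ** transpose S = mat 1"
    and N: "N \<in> C" "transpose N = N"
  shows "trace (N ** (transpose S ** S)) \<le> CARD('n)"
proof (rule ccontr)
  assume trace_gt: "\<not> ?thesis"
  define Z where "Z = S ** N ** transpose S"
  have "transpose Z = Z"
    using N(2) by (simp add: Z_def matrix_transpose_mul matrix_mul_assoc)
  moreover have "CARD('n) < trace Z"
    using trace_gt by (simp add: Z_def trace_congruence)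
  ultimately obtain t where t: "0 < t" "t \<le> 1" "1 < det ((1 - t) *\<^sub>R mat 1 + t *\<^sub>R Z)"
    using det_interpolate_identity_gt_one by blast
  have "(1 - t) *\<^sub>R mat 1 + t *\<^sub>R Z = S ** ((1 - t) *\<^sub>R M + t *\<^sub>R N) ** transpose S"
    using S by (simp add: Z_def matrix_add_ldistrib matrix_add_rdistrib
        matrix_scalar_ac scalar_matrix_assoc[symmetric] matrix_mul_assoc)
  then have "det ((1 - t) *\<^sub>R mat 1 + t *\<^sub>R Z) = det S * det S * det ((1 - t) *\<^sub>R M + t *\<^sub>R N)"
    by (simp add: det_congruence)
  also have "\<dots> \<le> det S * det S * det M"
    using t M N(1) \<open>convex C\<close> by (intro mult_left_mono M(2) convexD) auto
  also have "\<dots> = 1"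
    using arg_cong[OF S, of det] by (simp add: det_congruence)
  finally show False
    using t(3) by simp
qed

section \<open>Log-determinant duality\<close>

definition logdet_primal :: "('a \<Rightarrow> real^'n^'n) \<Rightarrow> 'a set \<Rightarrow> ereal" where
  "logdet_primal N I =
     (INF H \<in> {H. pos_def H \<and> (\<forall>i\<in>I. trace (N i ** H) \<le> CARD('n))}. - logdet H)"

definition logdet_dual :: "('a \<Rightarrow> real^'n^'n) \<Rightarrow> 'a set \<Rightarrow> ereal" where
  "logdet_dual N I = (SUP p \<in> prob_simplex I. logdet (\<Sum>i\<in>I. p i *\<^sub>R N i))"

lemma convex_hull_image_eq_mixtures:
  fixes f :: "'a \<Rightarrow> 'v::real_vector"
  assumes "finite I"
  shows "convex hull (f ` I) = (\<lambda>p. \<Sum>i\<in>I. p i *\<^sub>R f i) ` prob_simplex I"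
proof
  show "(\<lambda>p. \<Sum>i\<in>I. p i *\<^sub>R f i) ` prob_simplex I \<subseteq> convex hull (f ` I)"
    using assms by (auto simp: prob_simplex_def hull_inc intro!: convex_sum)
  have "f i \<in> (\<lambda>p. \<Sum>i\<in>I. p i *\<^sub>R f i) ` prob_simplex I" if "i \<in> I" for i
  proof
    show "(\<lambda>j. if j = i then 1 else 0) \<in> prob_simplex I"
      using assms that by (simp add: prob_simplex_def)
  qed (use assms that in \<open>simp add: if_distrib[of "\<lambda>c. c *\<^sub>R _"] cong: if_cong\<close>)
  moreover have "convex ((\<lambda>p. \<Sum>i\<in>I. p i *\<^sub>R f i) ` prob_simplex I)"
  proof (rule convexI)
    fix X Y and u v :: real
    assume "X \<in> (\<lambda>p. \<Sum>i\<in>I. p i *\<^sub>R f i) ` prob_simplex I" "Y \<in> (\<lambda>p. \<Sum>i\<in>I. p i *\<^sub>R f i) ` prob_simplex I"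
      and uv: "0 \<le> u" "0 \<le> v" "u + v = 1"
    then obtain p q where pq: "p \<in> prob_simplex I" "q \<in> prob_simplex I"
      and XY: "X = (\<Sum>i\<in>I. p i *\<^sub>R f i)" "Y = (\<Sum>i\<in>I. q i *\<^sub>R f i)"
      by blast
    have "(\<lambda>i. u * p i + v * q i) \<in> prob_simplex I"
      using uv pq by (auto simp: prob_simplex_def sum.distrib simp flip: sum_distrib_left)
    moreover have "u *\<^sub>R X + v *\<^sub>R Y = (\<Sum>i\<in>I. (u * p i + v * q i) *\<^sub>R f i)"
      by (simp add: XY scaleR_sum_right scaleR_add_left sum.distrib)
    ultimately show "u *\<^sub>R X + v *\<^sub>R Y \<in> (\<lambda>p. \<Sum>i\<in>I. p i *\<^sub>R f i) ` prob_simplex I"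
      by force
  qed
  ultimately show "convex hull (f ` I) \<subseteq> (\<lambda>p. \<Sum>i\<in>I. p i *\<^sub>R f i) ` prob_simplex I"
    by (intro hull_minimal) auto
qed

lemma logdet_weak_duality:
  fixes N :: "'a \<Rightarrow> real^'n^'n"
  assumes N: "\<And>i. i \<in> I \<Longrightarrow> pos_semidef (N i)" and p: "p \<in> prob_simplex I"
    and H: "pos_def H" "\<forall>i\<in>I. trace (N i ** H) \<le> CARD('n)"
  shows "logdet (\<Sum>i\<in>I. p i *\<^sub>R N i) \<le> - logdet H"
proof (cases "0 < det (\<Sum>i\<in>I. p i *\<^sub>R N i)")
  case True
  have p_nonneg: "\<And>i. i \<in> I \<Longrightarrow> 0 \<le> p i" and "sum p I = 1"
    using p by (auto simp: prob_simplex_def)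
  have "trace ((\<Sum>i\<in>I. p i *\<^sub>R N i) ** H) = (\<Sum>i\<in>I. p i * trace (N i ** H))"
    by (rule trace_mixture_mult)
  also have "\<dots> \<le> (\<Sum>i\<in>I. p i * CARD('n))"
    using H(2) p_nonneg by (intro sum_mono mult_left_mono) auto
  also have "\<dots> = CARD('n)"
    using \<open>sum p I = 1\<close> by (simp flip: sum_distrib_right)
  finally have "det (\<Sum>i\<in>I. p i *\<^sub>R N i) * det H \<le> 1"
    using det_mult_le_one_if_trace_le pos_semidef_mixture p_nonneg N H(1) by blast
  then have "ln (det (\<Sum>i\<in>I. p i *\<^sub>R N i) * det H) \<le> 0"
    using True pos_def_det_pos[OF H(1)] by simp
  then have "ln (det (\<Sum>i\<in>I. p i *\<^sub>R N i)) \<le> - ln (det H)"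
    using True pos_def_det_pos[OF H(1)] by (simp add: ln_mult)
  then show ?thesis
    using True pos_def_det_pos[OF H(1)] by (simp add: logdet_def)
qed (simp add: logdet_def)

lemma logdet_primal_unbounded:
  fixes N :: "'a \<Rightarrow> real^'n^'n" and x :: "real^'n"
  assumes "finite I" and N: "\<And>i. i \<in> I \<Longrightarrow> pos_semidef (N i)"
    and x: "norm x = 1" "\<And>i. i \<in> I \<Longrightarrow> x \<bullet> (N i *v x) = 0"
  shows "logdet_primal N I = - \<infinity>"
proof (rule ereal_bot)
  fix B :: real
  define c where "c = 1 / (1 + (\<Sum>i\<in>I. trace (N i)))"
  define s where "s = exp (- B) / c ^ (CARD('n) - 1)"
  define H where "H = c *\<^sub>R mat 1 + s *\<^sub>R outer x"
  have trace_nonneg: "0 \<le> trace (N i)" if "i \<in> I" for i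
    using N pos_semidef_trace_nonneg that by blast
  then have trace_le: "trace (N i) \<le> (\<Sum>i\<in>I. trace (N i))" if "i \<in> I" for i
    using that \<open>finite I\<close> by (intro member_le_sum) auto
  have "0 \<le> (\<Sum>i\<in>I. trace (N i))"
    using trace_nonneg by (simp add: sum_nonneg)
  then have "0 < c" "0 < s"
    by (simp_all add: c_def s_def)
  then have "pos_def H"
    unfolding H_def by (intro pos_def_scaled_identity_add_outer) auto
  moreover have "trace (N i ** H) \<le> CARD('n)" if "i \<in> I" for i
  proof -
    have "trace (N i ** H) = c * trace (N i)"
      using x(2)[OF that] by (simp add: H_def trace_mult_scaled_identity_add_outer)
    also have "\<dots> \<le> 1"
      using trace_le[OF that] \<open>0 \<le> (\<Sum>i\<in>I. trace (N i))\<close> by (simp add: c_def field_simps)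
    also have "1 \<le> real CARD('n)"
      using zero_less_card_finite[where 'a='n] by linarith
    finally show ?thesis .
  qed
  ultimately have "logdet_primal N I \<le> - logdet H"
    unfolding logdet_primal_def by (intro INF_lower) simp
  also have "- logdet H \<le> ereal B"
  proof -
    have "exp (- B) \<le> c ^ (CARD('n) - 1) * (c + s)"
      using \<open>0 < c\<close> \<open>0 < s\<close> by (simp add: s_def field_simps)
    also have "\<dots> = det H"
      unfolding H_def using x(1) by (rule det_scaled_identity_add_outer[symmetric])
    finally show ?thesis
      using pos_def_det_pos[OF \<open>pos_def H\<close>] ln_le_cancel_iff[of "exp (- B)" "det H"]
      by (simp add: logdet_def)
  qed
  finally show "logdet_primal N I \<le> ereal B" .
qed

lemma logdet_primal_unbounded_if_singular:
  fixes N :: "'a \<Rightarrow> real^'n^'n"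
  assumes "finite I" and N: "\<And>i. i \<in> I \<Longrightarrow> pos_semidef (N i)"
    and p: "\<And>i. i \<in> I \<Longrightarrow> 0 < p i" and singular: "det (\<Sum>i\<in>I. p i *\<^sub>R N i) \<le> 0"
  shows "logdet_primal N I = - \<infinity>"
proof -
  have "pos_semidef (\<Sum>i\<in>I. p i *\<^sub>R N i)"
    using p N by (intro pos_semidef_mixture) (auto simp: less_imp_le)
  then obtain x where x: "norm x = 1" "x \<bullet> ((\<Sum>i\<in>I. p i *\<^sub>R N i) *v x) = 0"
    using pos_semidef_singular_imp_isotropic singular by blast
  have x_N: "x \<bullet> (N i *v x) = 0" if "i \<in> I" for i
  proof -
    have nonneg: "0 \<le> p j * (x \<bullet> (N j *v x))" if "j \<in> I" for j
      using N[OF that] p[OF that] by (simp add: pos_semidef_def)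
    have "(\<Sum>j\<in>I. p j * (x \<bullet> (N j *v x))) = 0"
      using x(2) by (simp add: quadratic_form_mixture)
    then have "p i * (x \<bullet> (N i *v x)) = 0"
      using sum_nonneg_eq_0_iff[OF \<open>finite I\<close> nonneg] that by simp
    then show ?thesis
      using p[OF that] by simp
  qed
  show ?thesis
    using logdet_primal_unbounded[OF \<open>finite I\<close> N x(1) x_N] .
qed

lemma logdet_primal_le_at_det_maximizer:
  fixes N :: "'a \<Rightarrow> real^'n^'n"
  assumes N: "\<And>i. i \<in> I \<Longrightarrow> pos_semidef (N i)"
    and M: "pos_semidef M" "M \<in> convex hull (N ` I)"
      "\<And>M'. M' \<in> convex hull (N ` I) \<Longrightarrow> det M' \<le> det M"
    and "0 < det M"
  shows "logdet_primal N I \<le> logdet M"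
proof -
  have "det M \<noteq> 0"
    using \<open>0 < det M\<close> by simp
  then obtain S :: "real^'n^'n" where S: "S ** M ** transpose S = mat 1"
    using pos_semidef_whitening[OF M(1)] by blast
  then have det_S: "det S * det S * det M = 1"
    by (metis det_I det_congruence)
  define H where "H = transpose S ** S"
  have "pos_def H"
    unfolding H_def using det_S by (intro pos_def_transpose_mult_self) auto
  moreover have "trace (N i ** H) \<le> CARD('n)" if "i \<in> I" for i
    unfolding H_def
  proof (rule det_maximizer_trace_le[OF _ M(2,3) S])
    show "convex (convex hull (N ` I))" "N i \<in> convex hull (N ` I)"
      using that by (simp_all add: hull_inc)
    show "transpose (N i) = N i"
      using N[OF that] by (simp add: pos_semidef_def)
  qed
  ultimately have "logdet_primal N I \<le> - logdet H"
    unfolding logdet_primal_def by (intro INF_lower) simp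
  also have "- logdet H = logdet M"
  proof -
    have "det H * det M = 1"
      using det_S by (simp add: H_def det_mul det_transpose)
    then have "det H = 1 / det M"
      using \<open>0 < det M\<close> by (simp add: field_simps)
    then show ?thesis
      using \<open>0 < det M\<close> by (simp add: logdet_def ln_div)
  qed
  finally show ?thesis .
qed

lemma convex_hull_det_maximizer:
  fixes S :: "(real^'n^'n) set"
  assumes "finite S" "S \<noteq> {}"
  obtains M where "M \<in> convex hull S" "\<And>M'. M' \<in> convex hull S \<Longrightarrow> det M' \<le> det M"
proof -
  have "compact (convex hull S)" "convex hull S \<noteq> {}"
    using assms by (simp_all add: finite_imp_compact_convex_hull)
  moreover have "continuous_on (convex hull S) det"
    unfolding det_def by (intro continuous_intros)
  ultimately show thesis
    using continuous_attains_sup that by metis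
qed

theorem logdet_design_duality:
  fixes N :: "'a \<Rightarrow> real^'n^'n"
  assumes I: "finite I" "I \<noteq> {}" and N: "\<And>i. i \<in> I \<Longrightarrow> pos_semidef (N i)"
  shows "logdet_primal N I = logdet_dual N I"
proof (rule antisym)
  show "logdet_dual N I \<le> logdet_primal N I"
    unfolding logdet_primal_def logdet_dual_def using logdet_weak_duality[OF N]
    by (intro SUP_least INF_greatest) auto
  let ?C = "convex hull (N ` I)"
  have C: "?C = (\<lambda>p. \<Sum>i\<in>I. p i *\<^sub>R N i) ` prob_simplex I"
    using I(1) by (rule convex_hull_image_eq_mixtures)
  obtain M where "M \<in> ?C" and M_max: "\<And>M'. M' \<in> ?C \<Longrightarrow> det M' \<le> det M"
    using convex_hull_det_maximizer[of "N ` I"] I by blast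
  then obtain q where q: "q \<in> prob_simplex I" "M = (\<Sum>i\<in>I. q i *\<^sub>R N i)"
    unfolding C by blast
  show "logdet_primal N I \<le> logdet_dual N I"
  proof (cases "0 < det M")
    case True
    have "pos_semidef M"
      using q N by (auto simp: prob_simplex_def intro: pos_semidef_mixture)
    then have "logdet_primal N I \<le> logdet M"
      using logdet_primal_le_at_det_maximizer[OF N _ \<open>M \<in> ?C\<close> M_max True] by blast
    also have "logdet M \<le> logdet_dual N I"
      unfolding logdet_dual_def using q by (auto intro: SUP_upper)
    finally show ?thesis .
  next
    case False
    define u where "u = (\<lambda>i. if i \<in> I then 1 / real (card I) else 0)"
    have "0 < card I"
      using I by (simp add: card_gt_0_iff)
    then have "u \<in> prob_simplex I"
      by (simp add: u_def prob_simplex_def)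
    then have u_C: "(\<Sum>i\<in>I. u i *\<^sub>R N i) \<in> ?C"
      unfolding C by blast
    have singular: "det (\<Sum>i\<in>I. u i *\<^sub>R N i) \<le> 0"
      using M_max[OF u_C] False by linarith
    have "logdet_primal N I = - \<infinity>"
    proof (rule logdet_primal_unbounded_if_singular[OF I(1) N _ singular])
      show "0 < u i" if "i \<in> I" for i
        using that \<open>0 < card I\<close> by (simp add: u_def)
    qed
    then show ?thesis
      by simp
  qed
qed

theorem lemma5p1:
  fixes A Al :: "(real^'n) set" and pi_off :: "real^'n \<Rightarrow> real" and \<alpha> :: real
  assumes "finite A" and "span A = UNIV"
    and "pi_off \<in> prob_simplex A"
    and "Al \<subseteq> A" and "Al \<noteq> {}"
    and "0 \<le> \<alpha>" and "\<alpha> < 1"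
  shows "primal_val pi_off A Al \<alpha> = dual_val pi_off A Al \<alpha>"
proof -
  define N where "N a = (1 - \<alpha>) *\<^sub>R outer a + \<alpha> *\<^sub>R Vmat pi_off A" for a
  have "pos_semidef (Vmat pi_off A)"
    using assms(3) unfolding Vmat_def prob_simplex_def by (auto intro!: pos_semidef_mixture pos_semidef_outer)
  then have N_pos_semidef: "pos_semidef (N a)" for a
    using assms(6,7) by (simp add: N_def pos_semidef_add pos_semidef_scaleR pos_semidef_outer)
  have trace_N: "trace (N a ** H) = (1 - \<alpha>) * (a \<bullet> (H *v a)) + \<alpha> * trace (Vmat pi_off A ** H)" for a H
    by (simp add: N_def matrix_add_rdistrib scalar_matrix_assoc[symmetric] trace_add trace_scaleR
        trace_mult_outer trace_mul_sym[of "outer a" H])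
  have mixture_N: "(\<Sum>a\<in>Al. p a *\<^sub>R N a) = (1 - \<alpha>) *\<^sub>R Vmat p Al + \<alpha> *\<^sub>R Vmat pi_off A"
    if "p \<in> prob_simplex Al" for p
  proof -
    have "(\<Sum>a\<in>Al. p a *\<^sub>R N a) = (1 - \<alpha>) *\<^sub>R Vmat p Al + (\<Sum>a\<in>Al. p a) *\<^sub>R (\<alpha> *\<^sub>R Vmat pi_off A)"
      by (simp add: N_def Vmat_def[of p] scaleR_add_right sum.distrib scaleR_sum_right scaleR_sum_left sum_distrib_left mult.commute)
    then show ?thesis
      using that by (simp add: prob_simplex_def)
  qed
  have "finite Al"
    using assms(1,4) by (rule finite_subset[rotated])
  have "primal_val pi_off A Al \<alpha> = logdet_primal N Al"
    by (simp add: primal_val_def logdet_primal_def trace_N)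
  also have "\<dots> = logdet_dual N Al"
    using \<open>finite Al\<close> assms(5) N_pos_semidef by (rule logdet_design_duality)
  also have "\<dots> = dual_val pi_off A Al \<alpha>"
    unfolding logdet_dual_def dual_val_def by (rule SUP_cong) (simp_all add: mixture_N)
  finally show ?thesis .
qed

end
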